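(* There exist finite languages $L_1, L_2, L_3, L_4$ (over finite alphabets) such that $\mathbb{ROGI}^*(L_1, L_2)$ and $\mathbb{LOGI}^*(L_3, L_4)$ are not regular. (For instance, over $\{\$, a, b, c, d\}$ with $L_1 = \{acdb, cabd\}$, $L_2 = \{a\$b\}$: $\mathbb{ROGI}^*(L_1,L_2) = \{(ca)^i \$ (bd)^i \mid i \geq 0\} \cup \{a (ca)^i \$ (bd)^i b \mid i \geq 0\}$.)
   Context: Outfix-guided insertion: $x \leftarrow y = \{ x_1 u z v x_2 \mid x = x_1 u v x_2,\ y = u z v,\ u \neq \varepsilon,\ v \neq \varepsilon \}$, extended to languages by union over all pairs. Right one-sided iteration: $\mathbb{ROGI}^{(0)}(L_1,L_2) = L_2$, $\mathbb{ROGI}^{(i+1)}(L_1,L_2) = L_1 \leftarrow \mathbb{ROGI}^{(i)}(L_1,L_2)$, $\mathbb{ROGI}^*(L_1,L_2) = \bigcup_{i\geq 0}\mathbb{ROGI}^{(i)}(L_1,L_2)$. Left one-sided iteration: $\mathbb{LOGI}^{(0)}(L_1,L_2) = L_1$, $\mathbb{LOGI}^{(i+1)}(L_1,L_2) = \mathbb{LOGI}^{(i)}(L_1,L_2) \leftarrow L_2$, $\mathbb{LOGI}^*(L_1,L_2) = \bigcup_{i\geq 0}\mathbb{LOGI}^{(i)}(L_1,L_2)$. *)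

theory Defs
  imports Main
begin

definition ogi_word :: "'a list \<Rightarrow> 'a list \<Rightarrow> 'a list set" where
  "ogi_word x y = {x1 @ u @ z @ v @ x2 | x1 u z v x2.
      x = x1 @ u @ v @ x2 \<and> y = u @ z @ v \<and> u \<noteq> [] \<and> v \<noteq> []}"

definition ogi :: "'a list set \<Rightarrow> 'a list set \<Rightarrow> 'a list set" where
  "ogi L1 L2 = (\<Union>x\<in>L1. \<Union>y\<in>L2. ogi_word x y)"

primrec ROGI_pow :: "nat \<Rightarrow> 'a list set \<Rightarrow> 'a list set \<Rightarrow> 'a list set" where
  "ROGI_pow 0 L1 L2 = L2"
| "ROGI_pow (Suc i) L1 L2 = ogi L1 (ROGI_pow i L1 L2)"

definition ROGI_star :: "'a list set \<Rightarrow> 'a list set \<Rightarrow> 'a list set" where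
  "ROGI_star L1 L2 = (\<Union>i. ROGI_pow i L1 L2)"

primrec LOGI_pow :: "nat \<Rightarrow> 'a list set \<Rightarrow> 'a list set \<Rightarrow> 'a list set" where
  "LOGI_pow 0 L1 L2 = L1"
| "LOGI_pow (Suc i) L1 L2 = ogi (LOGI_pow i L1 L2) L2"

definition LOGI_star :: "'a list set \<Rightarrow> 'a list set \<Rightarrow> 'a list set" where
  "LOGI_star L1 L2 = (\<Union>i. LOGI_pow i L1 L2)"

inductive regular :: "'a list set \<Rightarrow> bool" where
  reg_empty: "regular {}"
| reg_eps: "regular {[]}"
| reg_letter: "regular {[c]}"
| reg_union: "regular A \<Longrightarrow> regular B \<Longrightarrow> regular (A \<union> B)"
| reg_conc: "regular A \<Longrightarrow> regular B \<Longrightarrow> regular {u @ v | u v. u \<in> A \<and> v \<in> B}"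
| reg_star: "regular A \<Longrightarrow> regular {concat ws | ws. set ws \<subseteq> A}"

end

theory Submission
  imports Defs
begin

text \<open>
A regular language has only finitely many left quotients, so it cannot separate the prefixes
p_m from one another by suffixes t_n with p_m t_n in the language iff m = n.
For L1 = {acdb, cabd} and L2 = {a$b}, every word of ROGI*(L1, L2) starts and ends with a ... b
or c ... d and has as many letters from {a, c} as from {b, d}: the end letters of the inserted
word must sit at the ends of the outfix of the guide word, which leaves only the trivial outfix
or one letter of the guide word on each side. Hence a (ca)^m $ (bd)^n b lies in ROGI* iff m = n.
For L3 = {ab} and L4 = {acdb, cabd}, every word of LOGI*(L3, L4) uses only the bigrams
ac, ca, ab, cd, db, bd and has as many c as d, which separates (ac)^m ab (db)^n in the same way.
\<close>

section \<open>Left quotients of regular languages\<close>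

definition conc :: "'a list set \<Rightarrow> 'a list set \<Rightarrow> 'a list set" where
  "conc A B = {u @ v | u v. u \<in> A \<and> v \<in> B}"

definition star :: "'a list set \<Rightarrow> 'a list set" where
  "star A = {concat ws | ws. set ws \<subseteq> A}"

definition Derivs :: "'a list \<Rightarrow> 'a list set \<Rightarrow> 'a list set" where
  "Derivs w L = {t. w @ t \<in> L}"

lemma concat_in_star: "set ws \<subseteq> A \<Longrightarrow> concat ws \<in> star A"
  unfolding star_def by blast

lemma Nil_in_star: "[] \<in> star A"
  using concat_in_star[of "[]"] by simp

lemma starE:
  assumes "u \<in> star A"
  obtains ws where "u = concat ws" "set ws \<subseteq> A"
  using assms unfolding star_def by blast

lemma star_append:
  assumes "u \<in> star A" "v \<in> star A"
  shows "u @ v \<in> star A"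
proof -
  obtain us vs where "u = concat us" "set us \<subseteq> A" "v = concat vs" "set vs \<subseteq> A"
    using assms by (elim starE)
  then show ?thesis using concat_in_star[of "us @ vs"] by simp
qed

lemma star_Cons: "a \<in> A \<Longrightarrow> u \<in> star A \<Longrightarrow> a @ u \<in> star A"
  using star_append[OF concat_in_star[of "[a]"]] by simp

lemma Derivs_union: "Derivs w (A \<union> B) = Derivs w A \<union> Derivs w B"
  by (auto simp: Derivs_def)

lemma Derivs_conc:
  "Derivs w (conc A B) = conc (Derivs w A) B \<union> \<Union> ((\<lambda>s. Derivs s B) ` {s. \<exists>u\<in>A. w = u @ s})"
  (is "?L = ?R")
proof
  show "?L \<subseteq> ?R"
  proof
    fix t assume "t \<in> ?L"
    then obtain u v where uv: "w @ t = u @ v" "u \<in> A" "v \<in> B" by (auto simp: Derivs_def conc_def)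
    then obtain us where "w = u @ us \<and> us @ t = v \<or> w @ us = u \<and> t = us @ v"
      by (auto simp: append_eq_append_conv2)
    then show "t \<in> ?R" using uv by (auto simp: Derivs_def conc_def)
  qed
  show "?R \<subseteq> ?L"
    by (auto simp: Derivs_def conc_def) (metis append.assoc)+
qed

lemma star_split:
  assumes "w @ t = concat ws" "set ws \<subseteq> A" "w \<noteq> []"
  shows "\<exists>u s t1 t2. w = u @ s \<and> u \<in> star A \<and> s @ t1 \<in> A \<and> t2 \<in> star A \<and> t = t1 @ t2"
  using assms
proof (induction ws arbitrary: w)
  case Nil
  then show ?case by simp
next
  case (Cons a ws)
  have a: "a \<in> A" and wsA: "set ws \<subseteq> A" using Cons.prems(2) by auto
  then have ws: "concat ws \<in> star A" by (simp add: concat_in_star)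
  from Cons.prems(1) obtain us
    where "w = a @ us \<and> us @ t = concat ws \<or> w @ us = a \<and> t = us @ concat ws"
    by (auto simp: append_eq_append_conv2)
  then show ?case
  proof (elim disjE conjE)
    assume w: "w = a @ us" and t: "us @ t = concat ws"
    show ?case
    proof (cases "us = []")
      case True
      then have "w = [] @ a" "a @ [] \<in> A" "t = [] @ concat ws" using w t a by simp_all
      then show ?thesis using Nil_in_star ws by blast
    next
      case False
      then obtain u s t1 t2 where "us = u @ s" "u \<in> star A" "s @ t1 \<in> A" "t2 \<in> star A" "t = t1 @ t2"
        using Cons.IH[OF t wsA False] by blast
      moreover have "a @ u \<in> star A" using star_Cons a \<open>u \<in> star A\<close> .
      moreover have "w = (a @ u) @ s" using w \<open>us = u @ s\<close> by simp
      ultimately show ?thesis by blast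
    qed
  next
    assume "w @ us = a" "t = us @ concat ws"
    then have "w = [] @ w" "w @ us \<in> A" "t = us @ concat ws" using a by simp_all
    then show ?case using Nil_in_star ws by blast
  qed
qed

lemma Derivs_star:
  "Derivs w (star A) = (if w = [] then star A else {}) \<union>
     \<Union> ((\<lambda>s. conc (Derivs s A) (star A)) ` {s. \<exists>u\<in>star A. w = u @ s})"
  (is "?L = ?R")
proof
  show "?L \<subseteq> ?R"
  proof
    fix t assume "t \<in> ?L"
    then obtain ws where ws: "w @ t = concat ws" "set ws \<subseteq> A"
      by (auto simp: Derivs_def elim: starE)
    show "t \<in> ?R"
    proof (cases "w = []")
      case True
      then show ?thesis using ws by (auto intro: concat_in_star)
    next
      case False
      then obtain u s t1 t2 where "w = u @ s" "u \<in> star A" "s @ t1 \<in> A" "t2 \<in> star A" "t = t1 @ t2"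
        using star_split[OF ws False] by blast
      then have "t \<in> conc (Derivs s A) (star A)" by (auto simp: Derivs_def conc_def)
      then show ?thesis using \<open>w = u @ s\<close> \<open>u \<in> star A\<close> by blast
    qed
  qed
  show "?R \<subseteq> ?L"
  proof
    fix t assume "t \<in> ?R"
    then have "w = [] \<and> t \<in> star A \<or>
      (\<exists>u s t1 t2. w = u @ s \<and> u \<in> star A \<and> s @ t1 \<in> A \<and> t2 \<in> star A \<and> t = t1 @ t2)"
      by (auto simp: Derivs_def conc_def split: if_splits)
    then consider "w = []" "t \<in> star A"
      | u s t1 t2 where "w = u @ s" "u \<in> star A" "s @ t1 \<in> A" "t2 \<in> star A" "t = t1 @ t2"
      by blast
    then show "t \<in> ?L"
    proof cases
      case 1
      then show ?thesis by (simp add: Derivs_def)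
    next
      case 2
      then have "w @ t = u @ ((s @ t1) @ t2)" by simp
      also have "\<dots> \<in> star A" using 2 by (intro star_append star_Cons)
      finally show ?thesis by (simp add: Derivs_def)
    qed
  qed
qed

lemma finite_range_Derivs_if_finite:
  assumes "finite L"
  shows "finite (range (\<lambda>w. Derivs w L))"
proof -
  let ?D = "\<Union>x\<in>L. (\<lambda>n. drop n x) ` {..length x}"
  have "Derivs w L \<subseteq> ?D" for w
  proof
    fix t assume "t \<in> Derivs w L"
    then have "w @ t \<in> L" by (simp add: Derivs_def)
    moreover have "t = drop (length w) (w @ t)" by simp
    ultimately show "t \<in> ?D" by fastforce
  qed
  then have "range (\<lambda>w. Derivs w L) \<subseteq> Pow ?D" by blast
  moreover have "finite ?D" using assms by blast
  ultimately show ?thesis by (rule finite_subset[OF _ finite_Pow_iff[THEN iffD2]])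
qed

lemma finite_range_factorI:
  assumes "\<And>x. f x = g (h x)" "\<And>x. h x \<in> S" "finite S"
  shows "finite (range f)"
proof -
  have "range f \<subseteq> g ` S" by (auto simp: assms(1) intro!: imageI assms(2))
  then show ?thesis using assms(3) by (simp add: finite_subset)
qed

lemma finite_range_Derivs_union:
  assumes "finite (range (\<lambda>w. Derivs w A))" "finite (range (\<lambda>w. Derivs w B))"
  shows "finite (range (\<lambda>w. Derivs w (A \<union> B)))"
  by (rule finite_range_factorI[where g = "\<lambda>(X, Y). X \<union> Y" and h = "\<lambda>w. (Derivs w A, Derivs w B)"
        and S = "range (\<lambda>w. Derivs w A) \<times> range (\<lambda>w. Derivs w B)"])
    (use assms in \<open>auto simp: Derivs_union\<close>)

lemma finite_range_Derivs_conc: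
  assumes "finite (range (\<lambda>w. Derivs w A))" "finite (range (\<lambda>w. Derivs w B))"
  shows "finite (range (\<lambda>w. Derivs w (conc A B)))"
  by (rule finite_range_factorI[where g = "\<lambda>(X, T). conc X B \<union> \<Union>T"
        and h = "\<lambda>w. (Derivs w A, (\<lambda>s. Derivs s B) ` {s. \<exists>u\<in>A. w = u @ s})"
        and S = "range (\<lambda>w. Derivs w A) \<times> Pow (range (\<lambda>w. Derivs w B))"])
    (use assms in \<open>auto simp: Derivs_conc\<close>)

lemma finite_range_Derivs_star:
  assumes "finite (range (\<lambda>w. Derivs w A))"
  shows "finite (range (\<lambda>w. Derivs w (star A)))"
  by (rule finite_range_factorI[where g = "\<lambda>(b, T). (if b then star A else {}) \<union> \<Union> ((\<lambda>X. conc X (star A)) ` T)"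
        and h = "\<lambda>w. (w = [], (\<lambda>s. Derivs s A) ` {s. \<exists>u\<in>star A. w = u @ s})"
        and S = "UNIV \<times> Pow (range (\<lambda>w. Derivs w A))"])
    (use assms in \<open>auto simp: Derivs_star image_image\<close>)

lemma regular_finite_range_Derivs:
  "regular L \<Longrightarrow> finite (range (\<lambda>w. Derivs w L))"
proof (induction rule: regular.induct)
  case (reg_conc A B)
  then show ?case using finite_range_Derivs_conc by (simp add: conc_def)
next
  case (reg_star A)
  then show ?case using finite_range_Derivs_star by (simp add: star_def)
qed (simp_all add: finite_range_Derivs_if_finite finite_range_Derivs_union)

lemma not_regular_if_fooling:
  fixes p t :: "nat \<Rightarrow> 'a list"
  assumes "\<And>n. p n @ t n \<in> L" and "\<And>m n. p m @ t n \<in> L \<Longrightarrow> m = n"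
  shows "\<not> regular L"
proof
  assume "regular L"
  have inj: "inj (\<lambda>n. Derivs (p n) L)"
  proof (rule injI)
    fix m n assume "Derivs (p m) L = Derivs (p n) L"
    then have "t n \<in> Derivs (p m) L" using assms(1) by (simp add: Derivs_def)
    then show "m = n" using assms(2) by (simp add: Derivs_def)
  qed
  have "range (\<lambda>n. Derivs (p n) L) \<subseteq> range (\<lambda>w. Derivs w L)" by blast
  then have "finite (range (\<lambda>n. Derivs (p n) L))"
    using regular_finite_range_Derivs[OF \<open>regular L\<close>] by (rule finite_subset)
  with inj show False by (simp add: finite_image_iff)
qed

lemma ogi_wordI:
  "u \<noteq> [] \<Longrightarrow> v \<noteq> [] \<Longrightarrow> x1 @ u @ z @ v @ x2 \<in> ogi_word (x1 @ u @ v @ x2) (u @ z @ v)"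
  unfolding ogi_word_def by blast

lemma ogi_wordE:
  assumes "r \<in> ogi_word x y"
  obtains x1 u z v x2 where "r = x1 @ u @ z @ v @ x2" "x = x1 @ u @ v @ x2" "y = u @ z @ v"
    "u \<noteq> []" "v \<noteq> []"
  using assms unfolding ogi_word_def by blast

lemma ROGI_star_base: "y \<in> L2 \<Longrightarrow> y \<in> ROGI_star L1 L2"
  unfolding ROGI_star_def using ROGI_pow.simps(1) by blast

lemma ROGI_star_insert:
  assumes "x1 @ u @ v @ x2 \<in> L1" "u @ z @ v \<in> ROGI_star L1 L2" "u \<noteq> []" "v \<noteq> []"
  shows "x1 @ u @ z @ v @ x2 \<in> ROGI_star L1 L2"
proof -
  obtain i where i: "u @ z @ v \<in> ROGI_pow i L1 L2" using assms(2) unfolding ROGI_star_def by blast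
  have "x1 @ u @ z @ v @ x2 \<in> ogi_word (x1 @ u @ v @ x2) (u @ z @ v)"
    using assms(3,4) by (rule ogi_wordI)
  then have "x1 @ u @ z @ v @ x2 \<in> ROGI_pow (Suc i) L1 L2"
    unfolding ROGI_pow.simps ogi_def by (intro UN_I[OF assms(1)] UN_I[OF i])
  then show ?thesis unfolding ROGI_star_def by blast
qed

lemma ROGI_star_induct[consumes 1, case_names base step]:
  assumes "w \<in> ROGI_star L1 L2"
    and "\<And>y. y \<in> L2 \<Longrightarrow> P y"
    and "\<And>x y r. x \<in> L1 \<Longrightarrow> P y \<Longrightarrow> r \<in> ogi_word x y \<Longrightarrow> P r"
  shows "P w"
proof -
  have "P w" if "w \<in> ROGI_pow i L1 L2" for i w
    using that by (induction i arbitrary: w) (auto simp: ogi_def intro: assms(2,3))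
  then show ?thesis using assms(1) unfolding ROGI_star_def by blast
qed

lemma LOGI_star_base: "x \<in> L1 \<Longrightarrow> x \<in> LOGI_star L1 L2"
  unfolding LOGI_star_def using LOGI_pow.simps(1) by blast

lemma LOGI_star_insert:
  assumes "x1 @ u @ v @ x2 \<in> LOGI_star L1 L2" "u @ z @ v \<in> L2" "u \<noteq> []" "v \<noteq> []"
  shows "x1 @ u @ z @ v @ x2 \<in> LOGI_star L1 L2"
proof -
  obtain i where i: "x1 @ u @ v @ x2 \<in> LOGI_pow i L1 L2" using assms(1) unfolding LOGI_star_def by blast
  have "x1 @ u @ z @ v @ x2 \<in> ogi_word (x1 @ u @ v @ x2) (u @ z @ v)"
    using assms(3,4) by (rule ogi_wordI)
  then have "x1 @ u @ z @ v @ x2 \<in> LOGI_pow (Suc i) L1 L2"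
    unfolding LOGI_pow.simps ogi_def by (intro UN_I[OF i] UN_I[OF assms(2)])
  then show ?thesis unfolding LOGI_star_def by blast
qed

lemma LOGI_star_induct[consumes 1, case_names base step]:
  assumes "w \<in> LOGI_star L1 L2"
    and "\<And>x. x \<in> L1 \<Longrightarrow> P x"
    and "\<And>x y r. P x \<Longrightarrow> y \<in> L2 \<Longrightarrow> r \<in> ogi_word x y \<Longrightarrow> P r"
  shows "P w"
proof -
  have "P w" if "w \<in> LOGI_pow i L1 L2" for i w
    using that by (induction i arbitrary: w) (auto simp: ogi_def intro: assms(2,3))
  then show ?thesis using assms(1) unfolding LOGI_star_def by blast
qed

lemma outfix_positions:
  assumes "x = x1 @ u @ v @ x2" "u \<noteq> []" "v \<noteq> []"
  obtains i j where "i < j" "j < length x" "x1 = take i x" "x2 = drop (Suc j) x"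
    "hd u = x ! i" "last v = x ! j"
proof -
  obtain k where k: "length v = Suc k" using assms(3) by (cases v) simp_all
  let ?j = "length (x1 @ u) + k"
  show ?thesis
  proof (rule that[of "length x1" ?j])
    show "length x1 < ?j" "?j < length x" using assms(1,2) k by simp_all
    show "x1 = take (length x1) x" "x2 = drop (Suc ?j) x" using assms(1) k by simp_all
    show "hd u = x ! length x1" using assms(1,2) by (simp add: nth_append hd_conv_nth)
    have "x ! ?j = v ! k" using assms(1) k by (simp add: nth_append)
    then show "last v = x ! ?j" using assms(3) k by (simp add: last_conv_nth)
  qed
qed

lemma infix_positions:
  assumes "y = u @ z @ v" "u \<noteq> []" "v \<noteq> []"
  obtains i j where "0 < i" "i \<le> j" "j < length y" "u = take i y" "z = drop i (take j y)"
    "v = drop j y"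
proof (rule that[of "length u" "length u + length z"])
  show "0 < length u" "length u + length z < length y" using assms by simp_all
  show "u = take (length u) y" "z = drop (length u) (take (length u + length z) y)"
    "v = drop (length u + length z) y"
    using assms(1) by simp_all
qed simp

lemma successively_outfix_insert:
  assumes "successively P (x1 @ u @ v @ x2)" "successively P (u @ z @ v)" "u \<noteq> []" "v \<noteq> []"
  shows "successively P (x1 @ u @ z @ v @ x2)"
  using assms by (auto simp: successively_append_iff hd_append last_append)

lemma count_list_concat_replicate:
  "count_list (concat (replicate n xs)) a = n * count_list xs a"
  by (induction n) auto

lemma concat_replicate_Suc_snoc: "concat (replicate (Suc n) xs) = concat (replicate n xs) @ xs"
  by (induction n) auto

section \<open>Two non-regular one-sided iterations\<close>

(* The letters a, b, c, d, $ of the paper are encoded as 0, 1, 2, 3, 4. *)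
abbreviation acdb_cabd :: "nat list set" where
  "acdb_cabd \<equiv> {[0, 2, 3, 1], [2, 0, 1, 3]}"

definition ROGI_inv :: "nat list \<Rightarrow> bool" where
  "ROGI_inv w \<longleftrightarrow> w \<noteq> [] \<and> (hd w, last w) \<in> {(0, 1), (2, 3)} \<and>
     count_list w 0 + count_list w 2 = count_list w 1 + count_list w 3"

lemma ROGI_inv_wrap:
  assumes "x \<in> acdb_cabd" "i < j" "j < length x"
    and "ROGI_inv y" "hd y = x ! i" "last y = x ! j"
  shows "ROGI_inv (take i x @ y @ drop (Suc j) x)"
proof -
  have "j < 4" using assms(1,3) by auto
  then have "(i, j) \<in> {(0,1), (0,2), (0,3), (1,2), (1,3), (2,3)}" using assms(2) by auto
  then show ?thesis using assms(1,4-) by (auto simp: ROGI_inv_def hd_append last_append)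
qed

lemma ROGI_star_inv:
  assumes "w \<in> ROGI_star acdb_cabd {[0, 4, 1]}"
  shows "ROGI_inv w"
  using assms
proof (induction rule: ROGI_star_induct)
  case (base y)
  then show ?case by (simp add: ROGI_inv_def)
next
  case (step x y r)
  then obtain x1 u z v x2 where r: "r = x1 @ u @ z @ v @ x2" and x: "x = x1 @ u @ v @ x2"
    and y: "y = u @ z @ v" and "u \<noteq> []" "v \<noteq> []"
    by (elim ogi_wordE)
  obtain i j where "i < j" "j < length x" "x1 = take i x" "x2 = drop (Suc j) x"
    "hd u = x ! i" "last v = x ! j"
    using outfix_positions[OF x \<open>u \<noteq> []\<close> \<open>v \<noteq> []\<close>] by blast
  moreover have "hd y = hd u" "last y = last v" using y \<open>u \<noteq> []\<close> \<open>v \<noteq> []\<close> by simp_all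
  ultimately have "ROGI_inv (take i x @ y @ drop (Suc j) x)"
    using step ROGI_inv_wrap by simp
  then show ?case using r y \<open>x1 = take i x\<close> \<open>x2 = drop (Suc j) x\<close> by simp
qed

lemma ROGI_witness:
  "[0] @ concat (replicate n [2, 0]) @ [4] @ concat (replicate n [1, 3]) @ [1]
     \<in> ROGI_star acdb_cabd {[0, 4, 1]}"
proof (induction n)
  case 0
  show ?case by (simp add: ROGI_star_base)
next
  case (Suc n)
  let ?m = "concat (replicate n [2, 0]) @ [4] @ concat (replicate n [1, 3]) :: nat list"
  have inner: "[2] @ [0] @ ?m @ [1] @ [3] \<in> ROGI_star acdb_cabd {[0, 4, 1]}"
    by (rule ROGI_star_insert) (use Suc in simp_all)
  have "[0] @ [2] @ ([0] @ ?m @ [1]) @ [3] @ [1] \<in> ROGI_star acdb_cabd {[0, 4, 1]}"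
    by (rule ROGI_star_insert) (use inner in simp_all)
  then show ?case unfolding concat_replicate_Suc_snoc[of n "[1, 3]"] by simp
qed

lemma not_regular_ROGI_star: "\<not> regular (ROGI_star acdb_cabd {[0, 4, 1]})"
proof (rule not_regular_if_fooling)
  fix n
  show "([0] @ concat (replicate n [2, 0]) @ [4]) @ concat (replicate n [1, 3]) @ [1]
    \<in> ROGI_star acdb_cabd {[0, 4, 1]}"
    using ROGI_witness by simp
next
  fix m n
  assume "([0] @ concat (replicate m [2, 0]) @ [4]) @ concat (replicate n [1, 3]) @ [1]
    \<in> ROGI_star acdb_cabd {[0, 4, 1]}"
  then have "ROGI_inv (([0] @ concat (replicate m [2, 0]) @ [4]) @ concat (replicate n [1, 3]) @ [1])"
    by (rule ROGI_star_inv)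
  then show "m = n" by (simp add: ROGI_inv_def count_list_concat_replicate)
qed

definition LOGI_bigram :: "nat \<Rightarrow> nat \<Rightarrow> bool" where
  "LOGI_bigram a b \<longleftrightarrow> (a, b) \<in> {(0, 2), (2, 0), (0, 1), (2, 3), (3, 1), (1, 3)}"

(* Inserting into x preserves this invariant: every bigram of the result lies in x or in the
   guide word, and the bigram (last u, hd v) of x excludes every split u z v of a guide word
   except those with z one of [], cd, ab. *)
definition LOGI_inv :: "nat list \<Rightarrow> bool" where
  "LOGI_inv w \<longleftrightarrow> successively LOGI_bigram w \<and> count_list w 2 = count_list w 3"

lemma acdb_cabd_infix_balanced:
  assumes "y \<in> acdb_cabd" "0 < i" "i \<le> j" "j < length y"
    and "LOGI_bigram (last (take i y)) (hd (drop j y))"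
  shows "count_list (drop i (take j y)) 2 = count_list (drop i (take j y)) 3"
proof -
  have "j < 4" using assms(1,4) by auto
  then have "(i, j) \<in> {(1,1), (1,2), (1,3), (2,2), (2,3), (3,3)}" using assms(2,3) by auto
  then show ?thesis using assms(1,5) by (auto simp: LOGI_bigram_def)
qed

lemma LOGI_star_inv:
  assumes "w \<in> LOGI_star {[0, 1]} acdb_cabd"
  shows "LOGI_inv w"
  using assms
proof (induction rule: LOGI_star_induct)
  case (base x)
  then show ?case by (simp add: LOGI_inv_def LOGI_bigram_def)
next
  case (step x y r)
  then obtain x1 u z v x2 where r: "r = x1 @ u @ z @ v @ x2" and x: "x = x1 @ u @ v @ x2"
    and y: "y = u @ z @ v" and "u \<noteq> []" "v \<noteq> []"
    by (elim ogi_wordE)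
  have x_succ: "successively LOGI_bigram x" using step.IH by (simp add: LOGI_inv_def)
  have y_succ: "successively LOGI_bigram y" using step.hyps by (auto simp: LOGI_bigram_def)
  have "LOGI_bigram (last u) (hd v)"
    using x_succ \<open>u \<noteq> []\<close> \<open>v \<noteq> []\<close> by (simp add: x successively_append_iff hd_append)
  moreover obtain i j where "0 < i" "i \<le> j" "j < length y" "u = take i y"
    "z = drop i (take j y)" "v = drop j y"
    using infix_positions[OF y \<open>u \<noteq> []\<close> \<open>v \<noteq> []\<close>] by blast
  ultimately have "count_list z 2 = count_list z 3"
    using acdb_cabd_infix_balanced step.hyps by simp
  moreover have "successively LOGI_bigram r"
    using successively_outfix_insert x_succ y_succ \<open>u \<noteq> []\<close> \<open>v \<noteq> []\<close> by (simp add: r x y)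
  ultimately show ?case using step.IH by (simp add: LOGI_inv_def r x)
qed

lemma LOGI_witness:
  "concat (replicate n [0, 2]) @ [0, 1] @ concat (replicate n [3, 1]) \<in> LOGI_star {[0, 1]} acdb_cabd"
proof (induction n)
  case 0
  show ?case by (simp add: LOGI_star_base)
next
  case (Suc n)
  let ?p = "concat (replicate n [0, 2]) :: nat list" and ?s = "concat (replicate n [3, 1]) :: nat list"
  have inner: "?p @ [0] @ [2, 3] @ [1] @ ?s \<in> LOGI_star {[0, 1]} acdb_cabd"
    by (rule LOGI_star_insert) (use Suc in simp_all)
  have "(?p @ [0]) @ [2] @ [0, 1] @ [3] @ [1] @ ?s \<in> LOGI_star {[0, 1]} acdb_cabd"
    by (rule LOGI_star_insert) (use inner in simp_all)
  then show ?case unfolding concat_replicate_Suc_snoc[of n "[0, 2]"] by simp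
qed

lemma not_regular_LOGI_star: "\<not> regular (LOGI_star {[0, 1]} acdb_cabd)"
proof (rule not_regular_if_fooling)
  fix n
  show "concat (replicate n [0, 2]) @ [0, 1] @ concat (replicate n [3, 1]) \<in> LOGI_star {[0, 1]} acdb_cabd"
    by (rule LOGI_witness)
next
  fix m n
  assume "concat (replicate m [0, 2]) @ [0, 1] @ concat (replicate n [3, 1]) \<in> LOGI_star {[0, 1]} acdb_cabd"
  then have "LOGI_inv (concat (replicate m [0, 2]) @ [0, 1] @ concat (replicate n [3, 1]))"
    by (rule LOGI_star_inv)
  then show "m = n" by (simp add: LOGI_inv_def count_list_concat_replicate)
qed

theorem proposition4p12:
  shows "\<exists>(\<Sigma>::nat set) (L1::nat list set) L2 L3 L4.
           finite \<Sigma> \<and>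
           finite L1 \<and> finite L2 \<and> finite L3 \<and> finite L4 \<and>
           L1 \<subseteq> lists \<Sigma> \<and> L2 \<subseteq> lists \<Sigma> \<and> L3 \<subseteq> lists \<Sigma> \<and> L4 \<subseteq> lists \<Sigma> \<and>
           \<not> regular (ROGI_star L1 L2) \<and> \<not> regular (LOGI_star L3 L4)"
  by (rule exI[of _ "{0..4}"], rule exI[of _ acdb_cabd], rule exI[of _ "{[0, 4, 1]}"],
      rule exI[of _ "{[0, 1]}"], rule exI[of _ acdb_cabd])
    (use not_regular_ROGI_star not_regular_LOGI_star in simp)

end
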